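(* Assume the setting and algorithm described in the context. If $0<\alpha\le\frac1{2L}$, then for all $k\ge0$, almost surely, $$\mathbb E\big[F(\bar x^{k+1})\,|\,\mathcal F^k\big]\le F(\bar x^k)-\frac\alpha2\|\nabla F(\bar x^k)\|^2-\frac\alpha4\|\overline{\nabla\mathbf f}(x^k)\|^2+\frac{\alpha L^2}{n}\|x^k-Jx^k\|^2+\frac{\alpha^2L^3}{n}t^k .$$
   Context: Setting. Let $n,m,p\ge1$ be integers and $\mathcal V=\{1,\dots,n\}$. For each $i\in\mathcal V$ and $j\in\{1,\dots,m\}$, $f_{i,j}:\mathbb R^p\to\mathbb R$ is differentiable and $L$-smooth for some $L>0$, i.e. $\|\nabla f_{i,j}(x)-\nabla f_{i,j}(y)\|\le L\|x-y\|$ for all $x,y\in\mathbb R^p$. Let $f_i:=\frac1m\sum_{j=1}^m f_{i,j}$ and $F:=\frac1n\sum_{i=1}^n f_i$, and assume $F^*:=\inf_{x\in\mathbb R^p}F(x)>-\infty$. Let $\underline W=(\underline w_{ir})\in\mathbb R^{n\times n}$ be a nonnegative, primitive, doubly stochastic matrix ($\underline W\mathbf 1_n=\mathbf 1_n$, $\mathbf 1_n^\top\underline W=\mathbf 1_n^\top$), and let $\lambda\in[0,1)$ be its second largest singular value. Any expression with $\lambda$ in a denominator is read as $+\infty$ when $\lambda=0$. Algorithm GT-SAGA with step-size $\alpha>0$: fix a deterministic $\bar x^0\in\mathbb R^p$; for all $i\in\mathcal V$ set $x_i^0=\bar x^0$, $z_{i,j}^0=x_i^0$ for all $j$, $y_i^0=0$,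 $g_i^{-1}=0$. For $k=0,1,2,\dots$ and every $i\in\mathcal V$: draw $\tau_i^k$ uniformly from $\{1,\dots,m\}$; set $g_i^k=\nabla f_{i,\tau_i^k}(x_i^k)-\nabla f_{i,\tau_i^k}(z_{i,\tau_i^k}^k)+\frac1m\sum_{j=1}^m\nabla f_{i,j}(z_{i,j}^k)$; set $y_i^{k+1}=\sum_{r=1}^n\underline w_{ir}(y_r^k+g_r^k-g_r^{k-1})$; set $x_i^{k+1}=\sum_{r=1}^n\underline w_{ir}(x_r^k-\alpha y_r^{k+1})$; draw $s_i^k$ uniformly from $\{1,\dots,m\}$; set $z_{i,j}^{k+1}=x_i^k$ if $j=s_i^k$ and $z_{i,j}^{k+1}=z_{i,j}^k$ otherwise. The family $\{\tau_i^k,s_i^k: i\in\mathcal V,k\ge0\}$ is independent. Notation. $x^k,y^k,g^k\in\mathbb R^{np}$ stack the $x_i^k$, $y_i^k$, $g_i^k$; $\nabla\mathbf f(x^k)\in\mathbb R^{np}$ stacks $\nabla f_i(x_i^k)$, $i=1,\dots,n$; $W=\underline W\otimes I_p$, $J=(\frac1n\mathbf 1_n\mathbf 1_n^\top)\otimes I_p$; $\bar x^k=\frac1n\sum_i x_i^k$, $\bar g^k=\frac1n\sum_i g_i^k$, $\overline{\nabla\mathbf f}(x^k)=\frac1n\sum_i\nabla f_i(x_i^k)$. $\mathcal F^0$ is the trivial $\sigma$-algebra and $\mathcal F^k=\sigma(\{\tau_i^t,s_i^t:i\in\mathcal V,\ t\le k-1\})$ for $k\ge1$. $t^k:=\frac1n\sum_{i=1}^n\frac1m\sum_{j=1}^m\|\bar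 x^k-z_{i,j}^k\|^2$. $\|\nabla\mathbf f(x^0)\|^2:=\sum_{i=1}^n\|\nabla f_i(\bar x^0)\|^2$. Norms are Euclidean (spectral for matrices); vector and matrix inequalities are entrywise. *)

theory Defs
  imports "HOL-Probability.Probability"
begin

(* Vertices are indexed by {..<n}, components by {..<m} (0-based). *)

fun mat_pow :: "nat \<Rightarrow> (nat \<Rightarrow> nat \<Rightarrow> real) \<Rightarrow> nat \<Rightarrow> nat \<Rightarrow> nat \<Rightarrow> real" where
  "mat_pow n W 0 = (\<lambda>i j. if i = j then 1 else 0)"
| "mat_pow n W (Suc k) = (\<lambda>i j. \<Sum>r<n. mat_pow n W k i r * W r j)"

definition primitive_mat :: "nat \<Rightarrow> (nat \<Rightarrow> nat \<Rightarrow> real) \<Rightarrow> bool" where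
  "primitive_mat n W \<longleftrightarrow> (\<exists>k. \<forall>i<n. \<forall>j<n. mat_pow n W k i j > 0)"

definition doubly_stochastic :: "nat \<Rightarrow> (nat \<Rightarrow> nat \<Rightarrow> real) \<Rightarrow> bool" where
  "doubly_stochastic n W \<longleftrightarrow>
     (\<forall>i<n. \<forall>j<n. W i j \<ge> 0) \<and> (\<forall>i<n. (\<Sum>r<n. W i r) = 1) \<and> (\<forall>r<n. (\<Sum>i<n. W i r) = 1)"

(* state of GT-SAGA at iteration k: (x^k, y^k, z^k, g^{k-1}) *)
type_synonym 'p gt_state =
  "(nat \<Rightarrow> real^'p) \<times> (nat \<Rightarrow> real^'p) \<times> (nat \<Rightarrow> nat \<Rightarrow> real^'p) \<times> (nat \<Rightarrow> real^'p)"

(* one random draw per iteration: (tau^k, s^k), tau^k i and s^k i in {..<m} *)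
type_synonym draw = "(nat \<Rightarrow> nat) \<times> (nat \<Rightarrow> nat)"

definition saga_grad ::
  "nat \<Rightarrow> (nat \<Rightarrow> nat \<Rightarrow> real^'p \<Rightarrow> real^'p) \<Rightarrow> 'p gt_state \<Rightarrow> draw \<Rightarrow> nat \<Rightarrow> real^'p" where
  "saga_grad m gf st d i =
     (case st of (x, y, z, gp) \<Rightarrow>
        gf i (fst d i) (x i) - gf i (fst d i) (z i (fst d i))
        + (1 / real m) *\<^sub>R (\<Sum>j<m. gf i j (z i j)))"

definition gt_step ::
  "nat \<Rightarrow> nat \<Rightarrow> (nat \<Rightarrow> nat \<Rightarrow> real) \<Rightarrow> real \<Rightarrow> (nat \<Rightarrow> nat \<Rightarrow> real^'p \<Rightarrow> real^'p)
   \<Rightarrow> 'p gt_state \<Rightarrow> draw \<Rightarrow> 'p gt_state" where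
  "gt_step n m W \<alpha> gf st d =
     (case st of (x, y, z, gp) \<Rightarrow>
       let g = saga_grad m gf st d;
           y' = (\<lambda>i. \<Sum>r<n. W i r *\<^sub>R (y r + g r - gp r));
           x' = (\<lambda>i. \<Sum>r<n. W i r *\<^sub>R (x r - \<alpha> *\<^sub>R y' r));
           z' = (\<lambda>i j. if j = snd d i then x i else z i j)
       in (x', y', z', g))"

fun gt_saga ::
  "nat \<Rightarrow> nat \<Rightarrow> (nat \<Rightarrow> nat \<Rightarrow> real) \<Rightarrow> real \<Rightarrow> (nat \<Rightarrow> nat \<Rightarrow> real^'p \<Rightarrow> real^'p)
   \<Rightarrow> real^'p \<Rightarrow> nat \<Rightarrow> (nat \<Rightarrow> draw) \<Rightarrow> 'p gt_state" where
  "gt_saga n m W \<alpha> gf x0 0 \<omega> = ((\<lambda>i. x0), (\<lambda>i. 0), (\<lambda>i j. x0), (\<lambda>i. 0))"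
| "gt_saga n m W \<alpha> gf x0 (Suc k) \<omega> = gt_step n m W \<alpha> gf (gt_saga n m W \<alpha> gf x0 k \<omega>) (\<omega> k)"

definition draw_pmf :: "nat \<Rightarrow> nat \<Rightarrow> draw pmf" where
  "draw_pmf n m = pmf_of_set (({..<n} \<rightarrow>\<^sub>E {..<m}) \<times> ({..<n} \<rightarrow>\<^sub>E {..<m}))"

definition gt_space :: "nat \<Rightarrow> nat \<Rightarrow> (nat \<Rightarrow> draw) measure" where
  "gt_space n m = (\<Pi>\<^sub>M k\<in>UNIV. measure_pmf (draw_pmf n m))"

(* F^k = sigma-algebra generated by the draws at times t \<le> k-1 *)
definition gt_filt :: "nat \<Rightarrow> nat \<Rightarrow> nat \<Rightarrow> (nat \<Rightarrow> draw) measure" where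
  "gt_filt n m k = vimage_algebra (space (gt_space n m)) (\<lambda>\<omega>. restrict \<omega> {..<k})
                     (\<Pi>\<^sub>M t\<in>{..<k}. measure_pmf (draw_pmf n m))"

definition avg_x :: "nat \<Rightarrow> (nat \<Rightarrow> real^'p) \<Rightarrow> real^'p" where
  "avg_x n x = (1 / real n) *\<^sub>R (\<Sum>i<n. x i)"

end

theory Submission
  imports Defs
begin

(* Since W is doubly stochastic, gradient tracking preserves sum_i y_i = sum_i g_i^(k-1), so the
   network average moves like centralized SGD: xbar^(k+1) = xbar^k - alpha gbar^k.  The descent
   lemma for the L-smooth F bounds F(xbar^(k+1)) by a quadratic in gbar^k whose coefficients are
   F^k-measurable.  Given F^k the fresh indices tau_i^k are independent and uniform, so the
   conditional expectation is the average of that quadratic over all tau.  The SAGA estimator is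
   unbiased, so the mean of gbar^k is the averaged local gradient, and its second moment adds
   1/n^2 times the per-agent variances, each at most 2 L^2 (|x_i - xbar|^2 + mean_j |xbar - z_ij|^2).
   Polarization of <grad F(xbar), mean>, the consensus bound
   |grad F(xbar) - mean|^2 <= L^2/n |x - Jx|^2 and alpha L <= 1/2 then give the claim. *)

section \<open>Averages over product sets of indices\<close>

lemma sum_PiE_indicator_fixed:
  fixes c :: "'i \<Rightarrow> 'a"
  assumes "finite I" "finite A" "J \<subseteq> I" "\<And>x. x \<in> J \<Longrightarrow> c x \<in> A"
  shows "(\<Sum>\<tau>\<in>PiE I (\<lambda>_. A). if \<forall>x\<in>J. \<tau> x = c x then 1 else 0 :: real) = real (card A) ^ card (I - J)"
proof -
  define f where "f x a = (if x \<in> J then (if a = c x then 1 else 0) else 1 :: real)" for x a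
  have "(\<Prod>x\<in>I. \<Sum>a\<in>A. f x a) = (\<Sum>\<tau>\<in>PiE I (\<lambda>_. A). \<Prod>x\<in>I. f x (\<tau> x))"
    by (rule prod_sum_PiE) (use assms in auto)
  also have "(\<Prod>x\<in>I. f x (\<tau> x)) = (if \<forall>x\<in>J. \<tau> x = c x then 1 else 0)" for \<tau>
  proof -
    have "(\<Prod>x\<in>I. f x (\<tau> x)) = (\<Prod>x\<in>J. if \<tau> x = c x then 1 else 0)"
      using assms by (intro prod.mono_neutral_cong_right) (auto simp: f_def)
    also have "\<dots> = (if \<forall>x\<in>J. \<tau> x = c x then 1 else 0)"
      using finite_subset[OF assms(3,1)] by (auto intro: prod.neutral prod_zero)
    finally show ?thesis .
  qed
  moreover have "(\<Prod>x\<in>I. \<Sum>a\<in>A. f x a) = real (card A) ^ card (I - J)"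
  proof -
    have "(\<Prod>x\<in>I. \<Sum>a\<in>A. f x a) = (\<Prod>x\<in>I - J. real (card A))"
      using assms by (intro prod.mono_neutral_cong_right) (auto simp: f_def)
    then show ?thesis by simp
  qed
  ultimately show ?thesis by simp
qed

lemma scaleR_indicator_eq: "(if c then 1 else 0 :: real) *\<^sub>R (v :: 'a::real_vector) = (if c then v else 0)"
  by simp

lemma sum_PiE_component:
  fixes h :: "'a \<Rightarrow> 'c::real_vector"
  assumes I: "finite I" "i \<in> I" and A: "finite A"
  shows "(\<Sum>\<tau>\<in>PiE I (\<lambda>_. A). h (\<tau> i)) = real (card A) ^ (card I - 1) *\<^sub>R (\<Sum>a\<in>A. h a)"
proof -
  let ?T = "PiE I (\<lambda>_. A)"
  have count: "(\<Sum>\<tau>\<in>?T. if \<tau> i = a then 1 else 0 :: real) = real (card A) ^ (card I - 1)" if "a \<in> A" for a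
    using sum_PiE_indicator_fixed[of I A "{i}" "\<lambda>_. a"] I A that by simp
  have "(\<Sum>\<tau>\<in>?T. h (\<tau> i)) = (\<Sum>\<tau>\<in>?T. \<Sum>a\<in>A. (if \<tau> i = a then 1 else 0 :: real) *\<^sub>R h a)"
    using I A by (intro sum.cong refl) (auto simp: PiE_mem scaleR_indicator_eq sum.delta')
  also have "\<dots> = (\<Sum>a\<in>A. (\<Sum>\<tau>\<in>?T. if \<tau> i = a then 1 else 0 :: real) *\<^sub>R h a)"
    by (subst sum.swap) (simp add: scaleR_sum_left)
  also have "\<dots> = (\<Sum>a\<in>A. real (card A) ^ (card I - 1) *\<^sub>R h a)"
    by (intro sum.cong refl) (simp add: count)
  finally show ?thesis by (simp add: scaleR_sum_right)
qed

lemma sum_PiE_two_components: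
  fixes h :: "'a \<Rightarrow> 'a \<Rightarrow> 'c::real_vector"
  assumes I: "finite I" "i \<in> I" "i' \<in> I" "i \<noteq> i'" and A: "finite A"
  shows "(\<Sum>\<tau>\<in>PiE I (\<lambda>_. A). h (\<tau> i) (\<tau> i'))
       = real (card A) ^ (card I - 2) *\<^sub>R (\<Sum>a\<in>A. \<Sum>a'\<in>A. h a a')"
proof -
  let ?T = "PiE I (\<lambda>_. A)"
  have count: "(\<Sum>\<tau>\<in>?T. if \<tau> i = a \<and> \<tau> i' = a' then 1 else 0 :: real) = real (card A) ^ (card I - 2)"
    if "a \<in> A" "a' \<in> A" for a a'
    using sum_PiE_indicator_fixed[of I A "{i, i'}" "\<lambda>x. if x = i then a else a'"] I A that
    by (simp add: card_Diff_subset numeral_2_eq_2)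
  have "(\<Sum>\<tau>\<in>?T. h (\<tau> i) (\<tau> i'))
      = (\<Sum>\<tau>\<in>?T. \<Sum>a\<in>A. \<Sum>a'\<in>A. (if \<tau> i = a \<and> \<tau> i' = a' then 1 else 0 :: real) *\<^sub>R h a a')"
  proof (intro sum.cong refl)
    fix \<tau> assume "\<tau> \<in> ?T"
    then have "\<tau> i \<in> A" "\<tau> i' \<in> A" using I by auto
    then have "h (\<tau> i) (\<tau> i') = (\<Sum>a\<in>A. if \<tau> i = a then \<Sum>a'\<in>A. if \<tau> i' = a' then h a a' else 0 else 0)"
      using A by (simp add: sum.delta')
    also have "\<dots> = (\<Sum>a\<in>A. \<Sum>a'\<in>A. (if \<tau> i = a \<and> \<tau> i' = a' then 1 else 0 :: real) *\<^sub>R h a a')"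
      by (intro sum.cong refl) (auto simp: scaleR_indicator_eq)
    finally show "h (\<tau> i) (\<tau> i') = \<dots>" .
  qed
  also have "\<dots> = (\<Sum>a\<in>A. \<Sum>a'\<in>A. (\<Sum>\<tau>\<in>?T. if \<tau> i = a \<and> \<tau> i' = a' then 1 else 0 :: real) *\<^sub>R h a a')"
    by (subst sum.swap) (simp add: scaleR_sum_left sum.swap[of _ ?T])
  also have "\<dots> = (\<Sum>a\<in>A. \<Sum>a'\<in>A. real (card A) ^ (card I - 2) *\<^sub>R h a a')"
    by (intro sum.cong refl) (simp add: count)
  finally show ?thesis by (simp add: scaleR_sum_right)
qed

lemma mean_PiE_sum:
  fixes G :: "'i \<Rightarrow> 'a \<Rightarrow> 'c::real_vector"
  assumes I: "finite I" and A: "finite A" "A \<noteq> {}"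
  shows "(1 / real (card A) ^ card I) *\<^sub>R (\<Sum>\<tau>\<in>PiE I (\<lambda>_. A). \<Sum>i\<in>I. G i (\<tau> i))
       = (\<Sum>i\<in>I. (1 / real (card A)) *\<^sub>R (\<Sum>a\<in>A. G i a))"
proof -
  have c: "real (card A) > 0" using A by (simp add: card_gt_0_iff)
  have card: "(1 / real (card A) ^ card I) * real (card A) ^ (card I - 1) = 1 / real (card A)" if "i \<in> I" for i
  proof -
    have "card I > 0" using I that by (auto simp: card_gt_0_iff)
    then have "real (card A) ^ card I = real (card A) ^ (card I - 1) * real (card A)"
      by (cases "card I") (simp_all add: mult.commute)
    then show ?thesis using c by (simp add: field_simps)
  qed
  have "(\<Sum>\<tau>\<in>PiE I (\<lambda>_. A). \<Sum>i\<in>I. G i (\<tau> i)) = (\<Sum>i\<in>I. real (card A) ^ (card I - 1) *\<^sub>R (\<Sum>a\<in>A. G i a))"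
    using I A by (subst sum.swap) (simp add: sum_PiE_component)
  then show ?thesis using card by (simp add: scaleR_sum_right)
qed

lemma mean_PiE_inner_components:
  fixes G :: "'i \<Rightarrow> 'a \<Rightarrow> 'c::real_inner"
  assumes I: "finite I" "i \<in> I" "i' \<in> I" and A: "finite A" "A \<noteq> {}"
  defines "\<mu> l \<equiv> (1 / real (card A)) *\<^sub>R (\<Sum>a\<in>A. G l a)"
  shows "(1 / real (card A) ^ card I) * (\<Sum>\<tau>\<in>PiE I (\<lambda>_. A). G i (\<tau> i) \<bullet> G i' (\<tau> i'))
       = \<mu> i \<bullet> \<mu> i'
         + (if i = i' then (1 / real (card A)) * (\<Sum>a\<in>A. (norm (G i a))\<^sup>2) - (norm (\<mu> i))\<^sup>2 else 0)"
proof (cases "i = i'")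
  case True
  let ?c = "real (card A)"
  have "card I > 0" using I by (auto simp: card_gt_0_iff)
  then have "?c ^ card I = ?c ^ (card I - 1) * ?c" by (cases "card I") (simp_all add: mult.commute)
  moreover have "(\<Sum>\<tau>\<in>PiE I (\<lambda>_. A). G i (\<tau> i) \<bullet> G i (\<tau> i)) = ?c ^ (card I - 1) * (\<Sum>a\<in>A. G i a \<bullet> G i a)"
    using sum_PiE_component[OF I(1,2) A(1), of "\<lambda>a. G i a \<bullet> G i a"] by simp
  moreover have "?c > 0" using A by (simp add: card_gt_0_iff)
  ultimately show ?thesis using True
    by (simp add: power2_norm_eq_inner)
next
  case False
  let ?c = "real (card A)"
  have "card {i, i'} \<le> card I" using I by (intro card_mono) auto
  then obtain k where "card I = k + 2" using False by (metis card_2_iff le_add_diff_inverse2)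
  then have "?c ^ card I = ?c ^ (card I - 2) * (?c * ?c)" by (simp add: power_add power2_eq_square)
  moreover have "(\<Sum>a\<in>A. \<Sum>a'\<in>A. G i a \<bullet> G i' a') = (\<Sum>a\<in>A. G i a) \<bullet> (\<Sum>a\<in>A. G i' a)"
    by (simp add: inner_sum_left inner_sum_right) (rule sum.swap)
  then have "(\<Sum>\<tau>\<in>PiE I (\<lambda>_. A). G i (\<tau> i) \<bullet> G i' (\<tau> i'))
      = ?c ^ (card I - 2) * ((\<Sum>a\<in>A. G i a) \<bullet> (\<Sum>a\<in>A. G i' a))"
    using sum_PiE_two_components[OF I False A(1), of "\<lambda>a a'. G i a \<bullet> G i' a'"] by simp
  moreover have "?c > 0" using A by (simp add: card_gt_0_iff)
  ultimately show ?thesis using False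
    by (simp add: \<mu>_def)
qed

lemma mean_PiE_norm_sq:
  fixes G :: "'i \<Rightarrow> 'a \<Rightarrow> 'c::real_inner"
  assumes I: "finite I" and A: "finite A" "A \<noteq> {}"
  defines "\<mu> i \<equiv> (1 / real (card A)) *\<^sub>R (\<Sum>a\<in>A. G i a)"
  shows "(1 / real (card A) ^ card I) * (\<Sum>\<tau>\<in>PiE I (\<lambda>_. A). (norm (\<Sum>i\<in>I. G i (\<tau> i)))\<^sup>2)
       = (norm (\<Sum>i\<in>I. \<mu> i))\<^sup>2 + (\<Sum>i\<in>I. (1 / real (card A)) * (\<Sum>a\<in>A. (norm (G i a))\<^sup>2) - (norm (\<mu> i))\<^sup>2)"
proof -
  let ?T = "PiE I (\<lambda>_. A)" and ?N = "real (card A) ^ card I"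
  define V where "V i = (1 / real (card A)) * (\<Sum>a\<in>A. (norm (G i a))\<^sup>2) - (norm (\<mu> i))\<^sup>2" for i
  have sq: "(norm (\<Sum>i\<in>I. v i))\<^sup>2 = (\<Sum>i\<in>I. \<Sum>i'\<in>I. v i \<bullet> v i')" for v :: "'i \<Rightarrow> 'c"
    by (simp add: power2_norm_eq_inner inner_sum_left inner_sum_right) (rule sum.swap)
  have "(1 / ?N) * (\<Sum>\<tau>\<in>?T. (norm (\<Sum>i\<in>I. G i (\<tau> i)))\<^sup>2)
      = (\<Sum>\<tau>\<in>?T. \<Sum>i\<in>I. \<Sum>i'\<in>I. (1 / ?N) * (G i (\<tau> i) \<bullet> G i' (\<tau> i')))"
    by (simp add: sq sum_distrib_left)
  also have "\<dots> = (\<Sum>i\<in>I. \<Sum>\<tau>\<in>?T. \<Sum>i'\<in>I. (1 / ?N) * (G i (\<tau> i) \<bullet> G i' (\<tau> i')))"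
    by (rule sum.swap)
  also have "\<dots> = (\<Sum>i\<in>I. \<Sum>i'\<in>I. \<Sum>\<tau>\<in>?T. (1 / ?N) * (G i (\<tau> i) \<bullet> G i' (\<tau> i')))"
    by (intro sum.cong refl) (rule sum.swap)
  also have "\<dots> = (\<Sum>i\<in>I. \<Sum>i'\<in>I. (1 / ?N) * (\<Sum>\<tau>\<in>?T. G i (\<tau> i) \<bullet> G i' (\<tau> i')))"
    by (simp add: sum_distrib_left)
  also have "\<dots> = (\<Sum>i\<in>I. \<Sum>i'\<in>I. \<mu> i \<bullet> \<mu> i' + (if i = i' then V i else 0))"
    unfolding \<mu>_def V_def using A by (intro sum.cong refl mean_PiE_inner_components[OF I])
  also have "\<dots> = (norm (\<Sum>i\<in>I. \<mu> i))\<^sup>2 + (\<Sum>i\<in>I. V i)"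
    using I by (simp add: sum.distrib sq)
  finally show ?thesis unfolding V_def .
qed

section \<open>Functions with Lipschitz gradient\<close>

definition lipschitz_gradient :: "real \<Rightarrow> ('a::real_inner \<Rightarrow> real) \<Rightarrow> ('a \<Rightarrow> 'a) \<Rightarrow> bool" where
  "lipschitz_gradient L f g \<longleftrightarrow>
     (\<forall>x. (f has_derivative (\<lambda>h. g x \<bullet> h)) (at x)) \<and> (\<forall>x y. norm (g x - g y) \<le> L * norm (x - y))"

lemma lipschitz_gradient_descent:
  assumes "lipschitz_gradient L f g"
  shows "f y \<le> f x + g x \<bullet> (y - x) + L / 2 * (norm (y - x))\<^sup>2"
proof -
  have der: "\<And>x. (f has_derivative (\<lambda>h. g x \<bullet> h)) (at x)"
    and lip: "\<And>x y. norm (g x - g y) \<le> L * norm (x - y)"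
    using assms by (auto simp: lipschitz_gradient_def)
  define h where "h = y - x"
  define \<phi> where "\<phi> t = f (x + t *\<^sub>R h) - t * (g x \<bullet> h) - L / 2 * t\<^sup>2 * (norm h)\<^sup>2" for t :: real
  define \<phi>' where "\<phi>' t = g (x + t *\<^sub>R h) \<bullet> h - g x \<bullet> h - L * t * (norm h)\<^sup>2" for t :: real
  have "((\<lambda>t. f (x + t *\<^sub>R h)) has_real_derivative (g (x + t *\<^sub>R h) \<bullet> h)) (at t)" for t
  proof -
    have "((\<lambda>t. x + t *\<^sub>R h) has_derivative (\<lambda>s. s *\<^sub>R h)) (at t)"
      by (auto intro!: derivative_eq_intros)
    from has_derivative_compose[OF this der]
    show ?thesis by (simp add: has_field_derivative_def mult.commute[of _ "g _ \<bullet> h"])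
  qed
  then have D: "(\<phi> has_real_derivative \<phi>' t) (at t)" for t
    unfolding \<phi>_def \<phi>'_def by (auto intro!: derivative_eq_intros)
  obtain s where s: "0 < s" "s < 1" "\<phi> 1 - \<phi> 0 = \<phi>' s"
    using MVT2[of 0 1 \<phi> \<phi>'] D by auto
  have "(g (x + s *\<^sub>R h) - g x) \<bullet> h \<le> norm (g (x + s *\<^sub>R h) - g x) * norm h"
    by (rule norm_cauchy_schwarz)
  also have "\<dots> \<le> L * norm (s *\<^sub>R h) * norm h"
    using lip[of "x + s *\<^sub>R h" x] by (intro mult_right_mono) auto
  also have "\<dots> = L * s * (norm h)\<^sup>2"
    using s by (simp add: power2_eq_square)
  finally have "\<phi>' s \<le> 0"
    unfolding \<phi>'_def by (simp add: inner_diff_left)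
  then show ?thesis
    using s unfolding \<phi>_def h_def by simp
qed

lemma norm_mean_sq_le:
  fixes v :: "'i \<Rightarrow> 'a::real_normed_vector"
  assumes "finite A" "A \<noteq> {}"
  shows "(norm ((1 / real (card A)) *\<^sub>R (\<Sum>a\<in>A. v a)))\<^sup>2 \<le> (1 / real (card A)) * (\<Sum>a\<in>A. (norm (v a))\<^sup>2)"
proof -
  have c: "real (card A) > 0" using assms by (simp add: card_gt_0_iff)
  have "(norm (\<Sum>a\<in>A. v a))\<^sup>2 \<le> (\<Sum>a\<in>A. norm (v a))\<^sup>2"
    by (intro power_mono norm_sum) simp
  also have "\<dots> \<le> real (card A) * (\<Sum>a\<in>A. (norm (v a))\<^sup>2)"
    using sum_squared_le_sum_of_squares[of "\<lambda>a. norm (v a)" A] by (simp add: mult.commute)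
  finally show ?thesis
    using c by (simp add: power_divide power2_eq_square field_simps)
qed

lemma lipschitz_gradient_mean:
  assumes A: "finite A" "A \<noteq> {}" and smooth: "\<And>a. a \<in> A \<Longrightarrow> lipschitz_gradient L (f a) (g a)"
  shows "lipschitz_gradient L (\<lambda>x. (1 / real (card A)) * (\<Sum>a\<in>A. f a x))
           (\<lambda>x. (1 / real (card A)) *\<^sub>R (\<Sum>a\<in>A. g a x))"
  unfolding lipschitz_gradient_def
proof safe
  fix x
  have "((\<lambda>x. \<Sum>a\<in>A. f a x) has_derivative (\<lambda>h. \<Sum>a\<in>A. g a x \<bullet> h)) (at x)"
    using smooth by (intro has_derivative_sum) (auto simp: lipschitz_gradient_def)
  from has_derivative_mult_right[OF this, of "1 / real (card A)"]
  show "((\<lambda>x. (1 / real (card A)) * (\<Sum>a\<in>A. f a x))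
      has_derivative (\<lambda>h. ((1 / real (card A)) *\<^sub>R (\<Sum>a\<in>A. g a x)) \<bullet> h)) (at x)"
    by (simp add: inner_sum_left)
next
  fix x y
  have c: "real (card A) > 0" using A by (simp add: card_gt_0_iff)
  have "norm ((1 / real (card A)) *\<^sub>R (\<Sum>a\<in>A. g a x) - (1 / real (card A)) *\<^sub>R (\<Sum>a\<in>A. g a y))
      = (1 / real (card A)) * norm (\<Sum>a\<in>A. g a x - g a y)"
    by (simp add: sum_subtractf flip: scaleR_diff_right)
  also have "\<dots> \<le> (1 / real (card A)) * (\<Sum>a\<in>A. L * norm (x - y))"
    using smooth c by (intro mult_left_mono order.trans[OF norm_sum] sum_mono)
      (auto simp: lipschitz_gradient_def)
  also have "\<dots> = L * norm (x - y)"
    using c by simp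
  finally show "norm ((1 / real (card A)) *\<^sub>R (\<Sum>a\<in>A. g a x) - (1 / real (card A)) *\<^sub>R (\<Sum>a\<in>A. g a y))
      \<le> L * norm (x - y)" .
qed

lemma norm_add_sq_le: "(norm (a + b))\<^sup>2 \<le> 2 * (norm a)\<^sup>2 + 2 * (norm (b :: 'a::real_normed_vector))\<^sup>2"
proof -
  have "(norm (a + b))\<^sup>2 \<le> (norm a + norm b)\<^sup>2"
    by (intro power_mono norm_triangle_ineq) simp
  also have "\<dots> \<le> 2 * (norm a)\<^sup>2 + 2 * (norm b)\<^sup>2"
    using sum_squares_ge_zero[of "norm a - norm b" 0] by (simp add: power2_eq_square algebra_simps)
  finally show ?thesis .
qed

lemma mean_sq_minus_sq_mean_le:
  fixes G :: "'i \<Rightarrow> 'a::real_inner"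
  assumes "finite A" "A \<noteq> {}"
  shows "(1 / real (card A)) * (\<Sum>a\<in>A. (norm (G a))\<^sup>2) - (norm ((1 / real (card A)) *\<^sub>R (\<Sum>a\<in>A. G a)))\<^sup>2
         \<le> (1 / real (card A)) * (\<Sum>a\<in>A. (norm (G a - v))\<^sup>2)"
proof -
  define \<mu> where "\<mu> = (1 / real (card A)) *\<^sub>R (\<Sum>a\<in>A. G a)"
  have c: "real (card A) > 0" using assms by (simp add: card_gt_0_iff)
  have expand: "(norm (u - v))\<^sup>2 = (norm u)\<^sup>2 - 2 * (u \<bullet> v) + (norm v)\<^sup>2" for u
    by (simp add: power2_norm_eq_inner inner_diff_left inner_diff_right inner_commute)
  have "(1 / real (card A)) * (\<Sum>a\<in>A. (norm (G a - v))\<^sup>2)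
      = (1 / real (card A)) * (\<Sum>a\<in>A. (norm (G a))\<^sup>2) - 2 * (\<mu> \<bullet> v) + (norm v)\<^sup>2"
    using c by (simp add: expand sum.distrib sum_subtractf \<mu>_def inner_sum_left
        flip: sum_distrib_left) (simp add: field_simps)
  moreover have "0 \<le> (norm (\<mu> - v))\<^sup>2" by simp
  ultimately show ?thesis
    unfolding \<mu>_def[symmetric] expand by linarith
qed

section \<open>The network average under GT-SAGA\<close>

lemma gt_step_simps:
  "gt_step n m W \<alpha> gf (x, y, z, gp) d =
    (let g = saga_grad m gf (x, y, z, gp) d;
         y' = (\<lambda>i. \<Sum>r<n. W i r *\<^sub>R (y r + g r - gp r))
     in ((\<lambda>i. \<Sum>r<n. W i r *\<^sub>R (x r - \<alpha> *\<^sub>R y' r)), y', (\<lambda>i j. if j = snd d i then x i else z i j), g))"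
  by (simp add: gt_step_def Let_def)

lemma sum_doubly_stochastic:
  fixes v :: "nat \<Rightarrow> 'a::real_vector"
  assumes "doubly_stochastic n W"
  shows "(\<Sum>i<n. \<Sum>r<n. W i r *\<^sub>R v r) = (\<Sum>r<n. v r)"
proof -
  have "(\<Sum>i<n. \<Sum>r<n. W i r *\<^sub>R v r) = (\<Sum>r<n. (\<Sum>i<n. W i r) *\<^sub>R v r)"
    by (subst sum.swap) (simp add: scaleR_sum_left)
  also have "\<dots> = (\<Sum>r<n. v r)"
    using assms by (simp add: doubly_stochastic_def)
  finally show ?thesis .
qed

lemma gt_saga_sum_tracking:
  assumes "doubly_stochastic n W" "gt_saga n m W \<alpha> gf x0 k \<omega> = (x, y, z, gp)"
  shows "(\<Sum>i<n. y i) = (\<Sum>i<n. gp i)"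
  using assms(2)
proof (induction k arbitrary: x y z gp)
  case (Suc k)
  obtain x' y' z' gp' where st: "gt_saga n m W \<alpha> gf x0 k \<omega> = (x', y', z', gp')"
    by (cases "gt_saga n m W \<alpha> gf x0 k \<omega>") auto
  let ?g = "saga_grad m gf (x', y', z', gp') (\<omega> k)"
  have "(x, y, z, gp) = gt_step n m W \<alpha> gf (x', y', z', gp') (\<omega> k)"
    using Suc.prems st by simp
  then have "y = (\<lambda>i. \<Sum>r<n. W i r *\<^sub>R (y' r + ?g r - gp' r)) \<and> gp = ?g"
    by (simp add: gt_step_simps Let_def)
  then show ?case
    using Suc.IH[OF st] by (simp add: sum_doubly_stochastic[OF assms(1)] sum.distrib sum_subtractf)
qed simp

lemma avg_x_gt_saga_Suc:
  assumes "doubly_stochastic n W"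
  shows "avg_x n (fst (gt_saga n m W \<alpha> gf x0 (Suc k) \<omega>))
       = avg_x n (fst (gt_saga n m W \<alpha> gf x0 k \<omega>))
         - \<alpha> *\<^sub>R avg_x n (saga_grad m gf (gt_saga n m W \<alpha> gf x0 k \<omega>) (\<omega> k))"
proof -
  obtain x y z gp where st: "gt_saga n m W \<alpha> gf x0 k \<omega> = (x, y, z, gp)"
    by (cases "gt_saga n m W \<alpha> gf x0 k \<omega>") auto
  let ?g = "saga_grad m gf (x, y, z, gp) (\<omega> k)"
  have "(\<Sum>r<n. y r + ?g r - gp r) = (\<Sum>r<n. ?g r)"
    using gt_saga_sum_tracking[OF assms st] by (simp add: sum.distrib sum_subtractf)
  then have tracking: "(\<Sum>r<n. \<Sum>r'<n. W r r' *\<^sub>R (y r' + ?g r' - gp r')) = (\<Sum>r<n. ?g r)"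
    by (simp only: sum_doubly_stochastic[OF assms])
  have "(\<Sum>i<n. \<Sum>r<n. W i r *\<^sub>R (x r - \<alpha> *\<^sub>R (\<Sum>r'<n. W r r' *\<^sub>R (y r' + ?g r' - gp r'))))
      = (\<Sum>r<n. x r - \<alpha> *\<^sub>R (\<Sum>r'<n. W r r' *\<^sub>R (y r' + ?g r' - gp r')))"
    by (rule sum_doubly_stochastic[OF assms])
  also have "\<dots> = (\<Sum>r<n. x r) - \<alpha> *\<^sub>R (\<Sum>r<n. ?g r)"
    by (simp only: sum_subtractf tracking flip: scaleR_sum_right)
  finally have "(\<Sum>i<n. \<Sum>r<n. W i r *\<^sub>R (x r - \<alpha> *\<^sub>R (\<Sum>r'<n. W r r' *\<^sub>R (y r' + ?g r' - gp r'))))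
      = (\<Sum>r<n. x r) - \<alpha> *\<^sub>R (\<Sum>r<n. ?g r)" .
  then show ?thesis
    by (simp add: st gt_step_simps avg_x_def Let_def scaleR_diff_right)
qed

section \<open>Random variables determined by finitely many draws\<close>

definition draw_eq_on :: "nat \<Rightarrow> draw \<Rightarrow> draw \<Rightarrow> bool" where
  "draw_eq_on n d d' \<longleftrightarrow> (\<forall>i<n. fst d i = fst d' i \<and> snd d i = snd d' i)"

definition draws_agree :: "nat \<Rightarrow> nat \<Rightarrow> (nat \<Rightarrow> draw) \<Rightarrow> (nat \<Rightarrow> draw) \<Rightarrow> bool" where
  "draws_agree n k \<omega> \<omega>' \<longleftrightarrow> (\<forall>t<k. draw_eq_on n (\<omega> t) (\<omega>' t))"

lemma draws_agree_Suc: "draws_agree n (Suc k) \<omega> \<omega>' \<longleftrightarrow> draws_agree n k \<omega> \<omega>' \<and> draw_eq_on n (\<omega> k) (\<omega>' k)"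
  by (auto simp: draws_agree_def less_Suc_eq)

(* The first k draws, observed only at the n agents, form a countable-valued summary of \<omega>;
   anything determined by that summary is measurable through it. *)
definition draw_prefix :: "nat \<Rightarrow> nat \<Rightarrow> (nat \<Rightarrow> draw) \<Rightarrow> nat \<Rightarrow> nat \<Rightarrow> nat \<times> nat" where
  "draw_prefix n k \<omega> t i = (if t < k \<and> i < n then (fst (\<omega> t) i, snd (\<omega> t) i) else (0, 0))"

definition draws_of_prefix :: "(nat \<Rightarrow> nat \<Rightarrow> nat \<times> nat) \<Rightarrow> nat \<Rightarrow> draw" where
  "draws_of_prefix \<nu> t = (\<lambda>i. fst (\<nu> t i), \<lambda>i. snd (\<nu> t i))"

lemma draws_agree_draws_of_prefix: "draws_agree n k \<omega> (draws_of_prefix (draw_prefix n k \<omega>))"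
  by (simp add: draws_agree_def draw_eq_on_def draws_of_prefix_def draw_prefix_def)

lemma draw_prefix_eq_iff: "draw_prefix n k \<omega> = draw_prefix n k \<omega>' \<longleftrightarrow> draws_agree n k \<omega> \<omega>'"
proof
  assume "draw_prefix n k \<omega> = draw_prefix n k \<omega>'"
  then have "draw_prefix n k \<omega> t i = draw_prefix n k \<omega>' t i" for t i
    by simp
  then show "draws_agree n k \<omega> \<omega>'"
    unfolding draws_agree_def draw_eq_on_def draw_prefix_def by (metis prod.inject)
next
  assume "draws_agree n k \<omega> \<omega>'"
  then show "draw_prefix n k \<omega> = draw_prefix n k \<omega>'"
    by (intro ext) (simp add: draws_agree_def draw_eq_on_def draw_prefix_def)
qed

lemma countable_range_draw_prefix: "countable (range (draw_prefix n k))"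
proof -
  let ?ext = "\<lambda>g t i. if t < k \<and> i < n then g t i else (0::nat, 0::nat)"
  have "range (draw_prefix n k) \<subseteq> ?ext ` (PiE {..<k} (\<lambda>_. PiE {..<n} (\<lambda>_. UNIV)))"
  proof safe
    fix \<omega>
    let ?g = "restrict (\<lambda>t. restrict (draw_prefix n k \<omega> t) {..<n}) {..<k}"
    have "?g \<in> PiE {..<k} (\<lambda>_. PiE {..<n} (\<lambda>_. UNIV))"
      by auto
    then show "draw_prefix n k \<omega> \<in> ?ext ` (PiE {..<k} (\<lambda>_. PiE {..<n} (\<lambda>_. UNIV)))"
      by (rule rev_image_eqI) (intro ext, simp add: draw_prefix_def)
  qed
  moreover have "countable (PiE {..<k} (\<lambda>_. PiE {..<n} (\<lambda>_. UNIV :: (nat \<times> nat) set)))"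
    by (intro countable_PiE) auto
  ultimately show ?thesis
    by (meson countable_image countable_subset)
qed

lemma measurable_draw_prefix:
  assumes "{..<k} \<subseteq> J"
  shows "draw_prefix n k \<in> measurable (PiM J (\<lambda>_. measure_pmf p)) (count_space (range (draw_prefix n k)))"
proof (subst measurable_count_space_eq_countable[OF countable_range_draw_prefix], safe)
  fix \<omega>
  let ?M = "PiM J (\<lambda>_. measure_pmf p)"
  have "draw_prefix n k -` {draw_prefix n k \<omega>} \<inter> space ?M
      = {\<omega>'\<in>space ?M. \<forall>t\<in>{..<k}. \<forall>i\<in>{..<n}. (fst (\<omega>' t) i, snd (\<omega>' t) i) = draw_prefix n k \<omega> t i}"
    by (auto simp: draw_prefix_eq_iff draws_agree_def draw_eq_on_def draw_prefix_def)
  also have "\<dots> \<in> sets ?M"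
  proof (intro sets.sets_Collect_finite_All finite_lessThan)
    fix t i assume "t \<in> {..<k}"
    then have "(\<lambda>\<omega>. \<omega> t) \<in> measurable ?M (measure_pmf p)"
      using assms by (intro measurable_component_singleton) auto
    from measurable_sets[OF this, of "{d. (fst d i, snd d i) = draw_prefix n k \<omega> t i}"]
    show "{\<omega>'\<in>space ?M. (fst (\<omega>' t) i, snd (\<omega>' t) i) = draw_prefix n k \<omega> t i} \<in> sets ?M"
      by (simp add: vimage_def Int_def conj_commute)
  qed
  finally show "draw_prefix n k -` {draw_prefix n k \<omega>} \<inter> space ?M \<in> sets ?M" .
qed auto

lemma borel_measurable_if_draws_agree:
  fixes \<Phi> :: "(nat \<Rightarrow> draw) \<Rightarrow> 'b::topological_space"
  assumes "\<And>\<omega> \<omega>'. draws_agree n k \<omega> \<omega>' \<Longrightarrow> \<Phi> \<omega> = \<Phi> \<omega>'" and "{..<k} \<subseteq> J"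
  shows "\<Phi> \<in> borel_measurable (PiM J (\<lambda>_. measure_pmf p))"
proof -
  have "\<Phi> = (\<lambda>\<omega>. \<Phi> (draws_of_prefix (draw_prefix n k \<omega>)))"
    using assms(1) draws_agree_draws_of_prefix by (auto simp: fun_eq_iff)
  also have "\<dots> \<in> borel_measurable (PiM J (\<lambda>_. measure_pmf p))"
    by (rule measurable_compose[OF measurable_draw_prefix[OF assms(2)]]) simp
  finally show ?thesis .
qed

lemma prob_space_gt_space: "prob_space (gt_space n m)"
  unfolding gt_space_def by (intro prob_space_PiM prob_space_measure_pmf)

lemma space_gt_space: "space (gt_space n m) = UNIV"
  unfolding gt_space_def by (simp add: space_PiM)

lemma measurable_gt_space_draw: "(\<lambda>\<omega>. \<omega> t) \<in> measurable (gt_space n m) (measure_pmf (draw_pmf n m))"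
  unfolding gt_space_def by (rule measurable_component_singleton) simp

lemma distr_gt_space_draw: "distr (gt_space n m) (measure_pmf (draw_pmf n m)) (\<lambda>\<omega>. \<omega> t) = measure_pmf (draw_pmf n m)"
  unfolding gt_space_def by (rule distr_PiM_component) (auto intro: prob_space_measure_pmf)

lemma set_draw_pmf:
  assumes "m \<ge> 1"
  shows "set_pmf (draw_pmf n m) = ({..<n} \<rightarrow>\<^sub>E {..<m}) \<times> ({..<n} \<rightarrow>\<^sub>E {..<m})"
proof -
  have "({..<n} \<rightarrow>\<^sub>E {..<m}) \<noteq> {}" using assms by (auto simp: PiE_eq_empty_iff lessThan_empty_iff)
  then show ?thesis unfolding draw_pmf_def
    by (subst set_pmf_of_set) (auto simp: finite_PiE)
qed

lemma AE_gt_space_draws: "AE \<omega> in gt_space n m. \<forall>t. \<omega> t \<in> set_pmf (draw_pmf n m)"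
  unfolding gt_space_def AE_all_countable
  by (intro allI AE_PiM_component prob_space_measure_pmf AE_measure_pmf) auto

lemma integrable_if_draws_agree:
  fixes \<Phi> :: "(nat \<Rightarrow> draw) \<Rightarrow> real"
  assumes m: "m \<ge> 1" and agree: "\<And>\<omega> \<omega>'. draws_agree n k \<omega> \<omega>' \<Longrightarrow> \<Phi> \<omega> = \<Phi> \<omega>'"
  shows "integrable (gt_space n m) \<Phi>"
proof -
  interpret prob_space "gt_space n m" by (rule prob_space_gt_space)
  define R where "R = {r. \<forall>i. (i \<in> {..<n} \<longrightarrow> r i \<in> {..<m} \<times> {..<m}) \<and> (i \<notin> {..<n} \<longrightarrow> r i = (0, 0))}"
  define D where "D = {\<nu>. \<forall>t. (t \<in> {..<k} \<longrightarrow> \<nu> t \<in> R) \<and> (t \<notin> {..<k} \<longrightarrow> \<nu> t = (\<lambda>_. (0, 0)))}"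
  have "finite R"
    unfolding R_def by (intro finite_set_of_finite_funs) auto
  then have "finite D"
    unfolding D_def by (intro finite_set_of_finite_funs) auto
  have prefix_in_D: "draw_prefix n k \<omega> \<in> D" if "\<forall>t. \<omega> t \<in> set_pmf (draw_pmf n m)" for \<omega>
    using that set_draw_pmf[OF m] by (fastforce simp: D_def R_def draw_prefix_def PiE_iff mem_Times_iff)
  have "AE \<omega> in gt_space n m. norm (\<Phi> \<omega>) \<le> (\<Sum>\<nu>\<in>D. norm (\<Phi> (draws_of_prefix \<nu>)))"
    using AE_gt_space_draws
  proof eventually_elim
    case (elim \<omega>)
    have "\<Phi> \<omega> = \<Phi> (draws_of_prefix (draw_prefix n k \<omega>))"
      using agree draws_agree_draws_of_prefix by blast
    then show ?case
      using prefix_in_D[OF elim] \<open>finite D\<close> by (auto intro!: member_le_sum)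
  qed
  moreover have "\<Phi> \<in> borel_measurable (gt_space n m)"
    unfolding gt_space_def by (rule borel_measurable_if_draws_agree[OF agree]) auto
  ultimately show ?thesis
    by (rule integrable_const_bound)
qed

lemma subalgebra_gt_filt: "subalgebra (gt_space n m) (gt_filt n m k)"
proof -
  have "sets (gt_filt n m k) \<subseteq> sets (gt_space n m)"
    unfolding gt_filt_def gt_space_def
    by (rule sets_image_in_sets[OF refl]) (rule measurable_restrict_subset, simp)
  then show ?thesis unfolding subalgebra_def gt_filt_def by simp
qed

lemma sigma_finite_subalgebra_gt_filt: "sigma_finite_subalgebra (gt_space n m) (gt_filt n m k)"
proof -
  interpret prob_space "gt_space n m" by (rule prob_space_gt_space)
  have "finite_measure_subalgebra (gt_space n m) (gt_filt n m k)"
    unfolding finite_measure_subalgebra_def finite_measure_subalgebra_axioms_def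
    using subalgebra_gt_filt finite_measure_axioms by auto
  then show ?thesis by (rule finite_measure_subalgebra_is_sigma_finite)
qed

lemma borel_measurable_gt_filt_if_draws_agree:
  fixes \<Phi> :: "(nat \<Rightarrow> draw) \<Rightarrow> 'b::topological_space"
  assumes agree: "\<And>\<omega> \<omega>'. draws_agree n k \<omega> \<omega>' \<Longrightarrow> \<Phi> \<omega> = \<Phi> \<omega>'"
  shows "\<Phi> \<in> borel_measurable (gt_filt n m k)"
proof -
  let ?P = "PiM {..<k} (\<lambda>_. measure_pmf (draw_pmf n m))"
  have "\<Phi> = (\<lambda>\<omega>. \<Phi> (restrict \<omega> {..<k}))"
    using agree by (auto simp: fun_eq_iff draws_agree_def draw_eq_on_def)
  also have "\<dots> \<in> borel_measurable (gt_filt n m k)"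
  proof (rule measurable_compose[of _ _ ?P])
    show "(\<lambda>\<omega>. restrict \<omega> {..<k}) \<in> measurable (gt_filt n m k) ?P"
      unfolding gt_filt_def by (rule measurable_vimage_algebra1) (auto simp: space_PiM)
    show "\<Phi> \<in> borel_measurable ?P"
      by (rule borel_measurable_if_draws_agree[OF agree]) auto
  qed
  finally show ?thesis .
qed

section \<open>Conditioning on the past draws\<close>

lemma indep_vars_gt_space_draws:
  "prob_space.indep_vars (gt_space n m) (\<lambda>_. measure_pmf (draw_pmf n m)) (\<lambda>t \<omega>. \<omega> t) UNIV"
proof -
  interpret prob_space "gt_space n m" by (rule prob_space_gt_space)
  have "(\<lambda>\<omega>. \<lambda>t\<in>UNIV. \<omega> t) = (\<lambda>\<omega>::nat \<Rightarrow> draw. \<omega>)"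
    by (auto simp: fun_eq_iff)
  then show ?thesis
    by (subst indep_vars_iff_distr_eq_PiM[OF _ measurable_gt_space_draw])
      (simp_all add: distr_gt_space_draw, simp add: gt_space_def distr_id)
qed

lemma measure_gt_filt_inter_draw:
  assumes A: "A \<in> sets (gt_filt n m k)"
  shows "measure (gt_space n m) (A \<inter> {\<omega>. \<omega> k \<in> C})
       = measure (gt_space n m) A * measure (measure_pmf (draw_pmf n m)) C"
proof -
  interpret prob_space "gt_space n m" by (rule prob_space_gt_space)
  let ?P = "measure_pmf (draw_pmf n m)"
  let ?past = "\<lambda>\<omega>. restrict \<omega> {..<k}" and ?now = "\<lambda>\<omega>. restrict \<omega> {k}"
  obtain B where B: "B \<in> sets (PiM {..<k} (\<lambda>_. ?P))" and A_eq: "A = ?past -` B \<inter> space (gt_space n m)"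
    using A unfolding gt_filt_def gt_space_def[symmetric] by (auto simp: sets_vimage_algebra2 space_PiM)
  define C' where "C' = {\<rho> \<in> space (PiM {k} (\<lambda>_. ?P)). \<rho> k \<in> C}"
  have C': "C' \<in> sets (PiM {k} (\<lambda>_. ?P))"
    using measurable_sets[OF measurable_component_singleton[of k "{k}" "\<lambda>_. ?P"], of C]
    by (simp add: C'_def vimage_def Int_def conj_commute)
  have "indep_var (PiM {..<k} (\<lambda>_. ?P)) ?past (PiM {k} (\<lambda>_. ?P)) ?now"
    by (rule indep_var_restrict[OF indep_vars_gt_space_draws]) auto
  from indep_varD[OF this B C']
  have "prob ((\<lambda>\<omega>. (?past \<omega>, ?now \<omega>)) -` (B \<times> C') \<inter> space (gt_space n m))
      = prob A * prob (?now -` C' \<inter> space (gt_space n m))"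
    by (simp add: A_eq)
  moreover have "(\<lambda>\<omega>. (?past \<omega>, ?now \<omega>)) -` (B \<times> C') \<inter> space (gt_space n m) = A \<inter> {\<omega>. \<omega> k \<in> C}"
    unfolding A_eq C'_def by (auto simp: space_PiM space_gt_space)
  moreover have "?now -` C' \<inter> space (gt_space n m) = (\<lambda>\<omega>. \<omega> k) -` C \<inter> space (gt_space n m)"
    unfolding C'_def by (auto simp: space_PiM space_gt_space)
  moreover have "prob ((\<lambda>\<omega>. \<omega> k) -` C \<inter> space (gt_space n m)) = measure ?P C"
    by (subst measure_distr[OF measurable_gt_space_draw, symmetric]) (simp_all add: distr_gt_space_draw)
  ultimately show ?thesis
    by simp
qed

lemma sets_gt_space_draw_eq: "{\<omega>. \<omega> k = d} \<in> sets (gt_space n m)"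
  using measurable_sets[OF measurable_gt_space_draw[of k n m], of "{d}"]
  by (simp add: space_gt_space vimage_def)

lemma real_cond_exp_indicator_draw:
  "AE \<omega> in gt_space n m.
     real_cond_exp (gt_space n m) (gt_filt n m k) (indicator {\<omega>. \<omega> k = d}) \<omega> = pmf (draw_pmf n m) d"
proof -
  interpret prob_space "gt_space n m" by (rule prob_space_gt_space)
  interpret sigma_finite_subalgebra "gt_space n m" "gt_filt n m k"
    by (rule sigma_finite_subalgebra_gt_filt)
  let ?E = "{\<omega>. \<omega> k = d}"
  note E = sets_gt_space_draw_eq[of k d n m]
  show ?thesis
  proof (rule real_cond_exp_charact)
    fix A assume A: "A \<in> sets (gt_filt n m k)"
    then have "A \<in> sets (gt_space n m)"
      using subalgebra_gt_filt[of n m k] by (auto simp: subalgebra_def)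
    then have "(\<integral>\<omega>\<in>A. indicator ?E \<omega> \<partial>gt_space n m) = measure (gt_space n m) (A \<inter> ?E)"
      using E by (simp add: set_lebesgue_integral_def indicator_inter_arith[symmetric] mult.commute)
    also have "\<dots> = measure (gt_space n m) A * pmf (draw_pmf n m) d"
      using measure_gt_filt_inter_draw[OF A, of "{d}"] by (simp add: measure_pmf_single)
    also have "\<dots> = (\<integral>\<omega>\<in>A. pmf (draw_pmf n m) d \<partial>gt_space n m)"
      using \<open>A \<in> sets (gt_space n m)\<close> by (simp add: set_integral_const)
    finally show "(\<integral>\<omega>\<in>A. indicator ?E \<omega> \<partial>gt_space n m) = (\<integral>\<omega>\<in>A. pmf (draw_pmf n m) d \<partial>gt_space n m)" .
  qed (use E in \<open>auto simp: emeasure_eq_measure\<close>)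
qed

lemma real_cond_exp_mult_indicator_draw:
  fixes h :: "(nat \<Rightarrow> draw) \<Rightarrow> real"
  assumes m: "m \<ge> 1" and past: "\<And>\<omega> \<omega>'. draws_agree n k \<omega> \<omega>' \<Longrightarrow> h \<omega> = h \<omega>'"
  shows "integrable (gt_space n m) (\<lambda>\<omega>. h \<omega> * indicator {\<omega>. \<omega> k = d} \<omega>)"
    and "AE \<omega> in gt_space n m. real_cond_exp (gt_space n m) (gt_filt n m k)
           (\<lambda>\<omega>. h \<omega> * indicator {\<omega>. \<omega> k = d} \<omega>) \<omega> = h \<omega> * pmf (draw_pmf n m) d"
proof -
  interpret sigma_finite_subalgebra "gt_space n m" "gt_filt n m k"
    by (rule sigma_finite_subalgebra_gt_filt)
  show int: "integrable (gt_space n m) (\<lambda>\<omega>. h \<omega> * indicator {\<omega>. \<omega> k = d} \<omega>)"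
    using sets_gt_space_draw_eq past
    by (intro integrable_real_mult_indicator integrable_if_draws_agree[OF m, of n k]) auto
  have "AE \<omega> in gt_space n m. real_cond_exp (gt_space n m) (gt_filt n m k)
      (\<lambda>\<omega>. h \<omega> * indicator {\<omega>. \<omega> k = d} \<omega>) \<omega>
      = h \<omega> * real_cond_exp (gt_space n m) (gt_filt n m k) (indicator {\<omega>. \<omega> k = d}) \<omega>"
    using int sets_gt_space_draw_eq past
    by (intro real_cond_exp_mult borel_measurable_gt_filt_if_draws_agree) auto
  with real_cond_exp_indicator_draw[of n m k d]
  show "AE \<omega> in gt_space n m. real_cond_exp (gt_space n m) (gt_filt n m k)
      (\<lambda>\<omega>. h \<omega> * indicator {\<omega>. \<omega> k = d} \<omega>) \<omega> = h \<omega> * pmf (draw_pmf n m) d"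
    by eventually_elim simp
qed

lemma real_cond_exp_fresh_draw:
  fixes g :: "draw \<Rightarrow> (nat \<Rightarrow> draw) \<Rightarrow> real"
  assumes m: "m \<ge> 1"
    and past: "\<And>d \<omega> \<omega>'. draws_agree n k \<omega> \<omega>' \<Longrightarrow> g d \<omega> = g d \<omega>'"
    and agents: "\<And>d d' \<omega>. draw_eq_on n d d' \<Longrightarrow> g d \<omega> = g d' \<omega>"
  shows "AE \<omega> in gt_space n m.
     real_cond_exp (gt_space n m) (gt_filt n m k) (\<lambda>\<omega>. g (\<omega> k) \<omega>) \<omega>
       = measure_pmf.expectation (draw_pmf n m) (\<lambda>d. g d \<omega>)"
proof -
  interpret sigma_finite_subalgebra "gt_space n m" "gt_filt n m k"
    by (rule sigma_finite_subalgebra_gt_filt)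
  let ?M = "gt_space n m" and ?F = "gt_filt n m k" and ?D = "set_pmf (draw_pmf n m)"
  \<comment> \<open>Split \<open>g (\<omega> k) \<omega>\<close> over the finite support of the fresh draw: each term is a
     past-measurable factor times an indicator independent of the past.\<close>
  define h where "h d \<omega> = g d \<omega> * indicator {\<omega>. \<omega> k = d} \<omega>" for d \<omega>
  have D: "finite ?D"
    using m by (simp add: set_draw_pmf finite_PiE)
  have int_h: "integrable ?M (h d)" for d
    unfolding h_def using m past by (rule real_cond_exp_mult_indicator_draw(1))
  have "integrable ?M (\<lambda>\<omega>. g (\<omega> k) \<omega>)"
    using past agents by (intro integrable_if_draws_agree[OF m, of n "Suc k"]) (metis draws_agree_Suc)
  moreover have "AE \<omega> in ?M. g (\<omega> k) \<omega> = (\<Sum>d\<in>?D. h d \<omega>)"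
    using AE_gt_space_draws by eventually_elim (use D in \<open>simp add: h_def indicator_def sum.delta'\<close>)
  ultimately have "AE \<omega> in ?M. real_cond_exp ?M ?F (\<lambda>\<omega>. g (\<omega> k) \<omega>) \<omega> = real_cond_exp ?M ?F (\<lambda>\<omega>. \<Sum>d\<in>?D. h d \<omega>) \<omega>"
    using int_h by (intro real_cond_exp_cong) auto
  moreover have "AE \<omega> in ?M. real_cond_exp ?M ?F (\<lambda>\<omega>. \<Sum>d\<in>?D. h d \<omega>) \<omega> = (\<Sum>d\<in>?D. real_cond_exp ?M ?F (h d) \<omega>)"
    using int_h by (rule real_cond_exp_sum)
  moreover have "AE \<omega> in ?M. \<forall>d\<in>?D. real_cond_exp ?M ?F (h d) \<omega> = g d \<omega> * pmf (draw_pmf n m) d"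
    unfolding h_def using m past by (intro eventually_ball_finite[OF D] ballI real_cond_exp_mult_indicator_draw(2))
  ultimately show ?thesis
    by eventually_elim (use D in \<open>simp add: integral_measure_pmf_real[of ?D]\<close>)
qed

section \<open>Dependence of the iterates on the draws\<close>

definition state_eq_on :: "nat \<Rightarrow> 'p gt_state \<Rightarrow> 'p gt_state \<Rightarrow> bool" where
  "state_eq_on n s s' \<longleftrightarrow> (case s of (x, y, z, gp) \<Rightarrow> case s' of (x', y', z', gp') \<Rightarrow>
     \<forall>i<n. x i = x' i \<and> y i = y' i \<and> z i = z' i \<and> gp i = gp' i)"

lemma saga_grad_cong:
  assumes "state_eq_on n s s'" "i < n" "fst d i = fst d' i"
  shows "saga_grad m gf s d i = saga_grad m gf s' d' i"
  using assms by (cases s; cases s') (simp add: state_eq_on_def saga_grad_def)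

lemma gt_step_cong:
  assumes "state_eq_on n s s'" "draw_eq_on n d d'"
  shows "state_eq_on n (gt_step n m W \<alpha> gf s d) (gt_step n m W \<alpha> gf s' d')"
proof -
  obtain x y z gp x' y' z' gp' where s: "s = (x, y, z, gp)" and s': "s' = (x', y', z', gp')"
    by (cases s; cases s') auto
  have g: "saga_grad m gf s d i = saga_grad m gf s' d' i" if "i < n" for i
    using assms that by (intro saga_grad_cong) (auto simp: draw_eq_on_def)
  have eq: "x i = x' i" "y i = y' i" "z i = z' i" "gp i = gp' i" if "i < n" for i
    using assms(1) that by (auto simp: state_eq_on_def s s')
  show ?thesis
    using assms(2) g eq unfolding s s' by (auto simp: gt_step_simps Let_def state_eq_on_def draw_eq_on_def
        intro!: sum.cong)
qed

lemma gt_saga_cong: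
  "draws_agree n k \<omega> \<omega>' \<Longrightarrow> state_eq_on n (gt_saga n m W \<alpha> gf x0 k \<omega>) (gt_saga n m W \<alpha> gf x0 k \<omega>')"
proof (induction k)
  case (Suc k)
  then show ?case
    by (simp add: draws_agree_Suc gt_step_cong)
qed (simp add: state_eq_on_def)

lemma avg_x_cong: "(\<And>i. i < n \<Longrightarrow> x i = x' i) \<Longrightarrow> avg_x n x = avg_x n x'"
  unfolding avg_x_def by simp

lemma state_eq_on_refl: "state_eq_on n s s"
  by (cases s) (simp add: state_eq_on_def)

lemma avg_x_state_cong: "state_eq_on n s s' \<Longrightarrow> avg_x n (fst s) = avg_x n (fst s')"
  by (cases s; cases s') (auto simp: state_eq_on_def intro: avg_x_cong)

section \<open>Expected descent of one step\<close>

lemma expectation_draw_pmf_fst: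
  assumes "m \<ge> 1"
  shows "measure_pmf.expectation (draw_pmf n m) (\<lambda>d. q (fst d))
       = (1 / real m ^ n) * (\<Sum>\<tau>\<in>PiE {..<n} (\<lambda>_. {..<m}). q \<tau>)"
proof -
  let ?T = "PiE {..<n} (\<lambda>_. {..<m})"
  have T: "finite ?T" "?T \<noteq> {}" "card ?T = m ^ n"
    using assms by (auto simp: finite_PiE PiE_eq_empty_iff lessThan_empty_iff card_PiE)
  have "measure_pmf.expectation (draw_pmf n m) (\<lambda>d. q (fst d)) = (\<Sum>d\<in>?T \<times> ?T. q (fst d)) / real (card (?T \<times> ?T))"
    unfolding draw_pmf_def using T by (intro integral_pmf_of_set) auto
  also have "(\<Sum>d\<in>?T \<times> ?T. q (fst d)) = (\<Sum>\<tau>\<in>?T. \<Sum>_\<in>?T. q \<tau>)"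
    by (simp only: sum.cartesian_product case_prod_unfold)
  also have "\<dots> = (\<Sum>\<tau>\<in>?T. q \<tau> * real (card ?T))"
    by (simp add: mult.commute)
  also have "\<dots> = (\<Sum>\<tau>\<in>?T. q \<tau>) * real (m ^ n)"
    by (simp only: T(3) flip: sum_distrib_right)
  finally show ?thesis
    using T assms by (simp add: card_cartesian_product)
qed

definition saga_sample :: "nat \<Rightarrow> (nat \<Rightarrow> nat \<Rightarrow> real^'p \<Rightarrow> real^'p) \<Rightarrow> (nat \<Rightarrow> real^'p)
    \<Rightarrow> (nat \<Rightarrow> nat \<Rightarrow> real^'p) \<Rightarrow> nat \<Rightarrow> nat \<Rightarrow> real^'p" where
  "saga_sample m gf x z i j = gf i j (x i) - gf i j (z i j) + (1 / real m) *\<^sub>R (\<Sum>j'<m. gf i j' (z i j'))"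

lemma saga_grad_eq_saga_sample: "saga_grad m gf (x, y, z, gp) d i = saga_sample m gf x z i (fst d i)"
  by (simp add: saga_grad_def saga_sample_def)

lemma sum_saga_sample: "(\<Sum>j<m. saga_sample m gf x z i j) = (\<Sum>j<m. gf i j (x i))"
proof (cases "m = 0")
  case False
  then have "real m *\<^sub>R ((1 / real m) *\<^sub>R (\<Sum>j<m. gf i j (z i j))) = (\<Sum>j<m. gf i j (z i j))"
    by simp
  then show ?thesis
    by (simp add: saga_sample_def sum.distrib sum_subtractf sum_constant_scaleR del: sum_constant)
qed simp

lemma saga_sample_variance_le:
  assumes m: "m \<ge> 1" and smooth: "\<And>j x y. j < m \<Longrightarrow> norm (gf i j x - gf i j y) \<le> L * norm (x - y)"
  shows "(1 / real m) * (\<Sum>j<m. (norm (saga_sample m gf x z i j))\<^sup>2)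
           - (norm ((1 / real m) *\<^sub>R (\<Sum>j<m. saga_sample m gf x z i j)))\<^sup>2
         \<le> 2 * L\<^sup>2 * (norm (x i - v))\<^sup>2 + 2 * L\<^sup>2 * ((1 / real m) * (\<Sum>j<m. (norm (v - z i j))\<^sup>2))"
proof -
  let ?c = "(1 / real m) *\<^sub>R (\<Sum>j<m. gf i j (z i j))"
  have "(1 / real m) * (\<Sum>j<m. (norm (saga_sample m gf x z i j))\<^sup>2)
          - (norm ((1 / real m) *\<^sub>R (\<Sum>j<m. saga_sample m gf x z i j)))\<^sup>2
      \<le> (1 / real m) * (\<Sum>j<m. (norm (saga_sample m gf x z i j - ?c))\<^sup>2)"
    using mean_sq_minus_sq_mean_le[of "{..<m}" "saga_sample m gf x z i" ?c] m
    by (simp add: lessThan_empty_iff)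
  also have "\<dots> \<le> (1 / real m) * (\<Sum>j<m. 2 * L\<^sup>2 * (norm (x i - v))\<^sup>2 + 2 * L\<^sup>2 * (norm (v - z i j))\<^sup>2)"
  proof (intro mult_left_mono sum_mono)
    fix j assume "j \<in> {..<m}"
    then have "norm (saga_sample m gf x z i j - ?c) \<le> L * norm ((x i - v) + (v - z i j))"
      using smooth by (simp add: saga_sample_def)
    then have "(norm (saga_sample m gf x z i j - ?c))\<^sup>2 \<le> L\<^sup>2 * (norm ((x i - v) + (v - z i j)))\<^sup>2"
      by (metis norm_ge_zero power_mono power_mult_distrib)
    also have "\<dots> \<le> L\<^sup>2 * (2 * (norm (x i - v))\<^sup>2 + 2 * (norm (v - z i j))\<^sup>2)"
      by (intro mult_left_mono norm_add_sq_le) simp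
    finally show "(norm (saga_sample m gf x z i j - ?c))\<^sup>2
        \<le> 2 * L\<^sup>2 * (norm (x i - v))\<^sup>2 + 2 * L\<^sup>2 * (norm (v - z i j))\<^sup>2"
      by (simp add: algebra_simps)
  qed simp
  also have "\<dots> = 2 * L\<^sup>2 * (norm (x i - v))\<^sup>2 + 2 * L\<^sup>2 * ((1 / real m) * (\<Sum>j<m. (norm (v - z i j))\<^sup>2))"
    using m by (simp add: sum.distrib field_simps flip: sum_distrib_left)
  finally show ?thesis .
qed

lemma norm_mean_grad_diff_le:
  fixes gf :: "nat \<Rightarrow> nat \<Rightarrow> 'a::real_normed_vector \<Rightarrow> 'a"
  assumes n: "n \<ge> 1" and m: "m \<ge> 1"
    and smooth: "\<And>i j x y. i < n \<Longrightarrow> j < m \<Longrightarrow> norm (gf i j x - gf i j y) \<le> L * norm (x - y)"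
  shows "(norm ((1 / real n) *\<^sub>R (\<Sum>i<n. (1 / real m) *\<^sub>R (\<Sum>j<m. gf i j v))
              - (1 / real n) *\<^sub>R (\<Sum>i<n. (1 / real m) *\<^sub>R (\<Sum>j<m. gf i j (x i)))))\<^sup>2
         \<le> L\<^sup>2 / real n * (\<Sum>i<n. (norm (x i - v))\<^sup>2)"
proof -
  define w where "w i = (1 / real m) *\<^sub>R (\<Sum>j<m. gf i j v - gf i j (x i))" for i
  have "(norm (w i))\<^sup>2 \<le> L\<^sup>2 * (norm (x i - v))\<^sup>2" if "i < n" for i
  proof -
    have "(norm (w i))\<^sup>2 \<le> (1 / real m) * (\<Sum>j<m. (norm (gf i j v - gf i j (x i)))\<^sup>2)"
      unfolding w_def using norm_mean_sq_le[of "{..<m}" "\<lambda>j. gf i j v - gf i j (x i)"] m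
      by (simp add: lessThan_empty_iff)
    also have "\<dots> \<le> (1 / real m) * (\<Sum>j<m. L\<^sup>2 * (norm (x i - v))\<^sup>2)"
    proof (intro mult_left_mono sum_mono)
      fix j assume "j \<in> {..<m}"
      then have "norm (gf i j v - gf i j (x i)) \<le> L * norm (x i - v)"
        using smooth[of i j v "x i"] that by (simp add: norm_minus_commute)
      then show "(norm (gf i j v - gf i j (x i)))\<^sup>2 \<le> L\<^sup>2 * (norm (x i - v))\<^sup>2"
        by (metis norm_ge_zero power_mono power_mult_distrib)
    qed simp
    also have "\<dots> = L\<^sup>2 * (norm (x i - v))\<^sup>2"
      using m by simp
    finally show ?thesis .
  qed
  then have "(1 / real n) * (\<Sum>i<n. (norm (w i))\<^sup>2) \<le> (1 / real n) * (\<Sum>i<n. L\<^sup>2 * (norm (x i - v))\<^sup>2)"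
    by (intro mult_left_mono sum_mono) auto
  moreover have "(norm ((1 / real n) *\<^sub>R (\<Sum>i<n. w i)))\<^sup>2 \<le> (1 / real n) * (\<Sum>i<n. (norm (w i))\<^sup>2)"
    using norm_mean_sq_le[of "{..<n}" w] n by (simp add: lessThan_empty_iff)
  ultimately show ?thesis
    by (simp add: w_def scaleR_diff_right sum_subtractf sum_distrib_left)
qed

lemma expected_descent_arith:
  fixes n :: nat
  assumes n: "n \<ge> 1" and L: "L > 0" and \<alpha>: "0 < \<alpha>" "\<alpha> \<le> 1 / (2 * L)"
    and D2: "D2 \<le> L\<^sup>2 / real n * P" and SV: "SV \<le> 2 * L\<^sup>2 * P + 2 * L\<^sup>2 * real n * T"
    and nonneg: "P \<ge> 0" "T \<ge> 0" "N2 \<ge> 0"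
  shows "Fx - \<alpha> * ((g2 + N2 - D2) / 2) + L * \<alpha>\<^sup>2 / 2 * (N2 + (1 / real n)\<^sup>2 * SV)
         \<le> Fx - \<alpha> / 2 * g2 - \<alpha> / 4 * N2 + \<alpha> * L\<^sup>2 / real n * P + \<alpha>\<^sup>2 * L ^ 3 / real n * T"
proof -
  define Q where "Q = \<alpha> * L\<^sup>2 / real n * P"
  have "real n \<ge> 1" using n by simp
  have \<alpha>L: "\<alpha> * L \<le> 1 / 2" using \<alpha> L by (simp add: field_simps)
  have Q: "Q \<ge> 0" using \<alpha> nonneg by (simp add: Q_def)
  have "\<alpha> * D2 \<le> Q"
    using mult_left_mono[OF D2, of \<alpha>] \<alpha> by (simp add: Q_def)
  moreover have "L * \<alpha>\<^sup>2 / 2 * N2 \<le> \<alpha> / 4 * N2"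
  proof -
    have "L * \<alpha>\<^sup>2 / 2 = (\<alpha> * L) * \<alpha> / 2" by (simp add: power2_eq_square)
    also have "\<dots> \<le> \<alpha> / 4" using \<alpha>L \<alpha> by (simp add: field_simps)
    finally show ?thesis using nonneg by (intro mult_right_mono) auto
  qed
  moreover have "L * \<alpha>\<^sup>2 / 2 * ((1 / real n)\<^sup>2 * SV) \<le> (\<alpha> * L) / real n * Q + \<alpha>\<^sup>2 * L ^ 3 / real n * T"
  proof -
    have "L * \<alpha>\<^sup>2 / 2 * ((1 / real n)\<^sup>2 * SV)
        \<le> L * \<alpha>\<^sup>2 / 2 * ((1 / real n)\<^sup>2 * (2 * L\<^sup>2 * P + 2 * L\<^sup>2 * real n * T))"
      using SV L by (intro mult_left_mono) auto
    also have "\<dots> = (\<alpha> * L) / real n * Q + \<alpha>\<^sup>2 * L ^ 3 / real n * T"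
      using \<open>real n \<ge> 1\<close> by (simp add: Q_def power2_eq_square power3_eq_cube field_simps)
    finally show ?thesis .
  qed
  moreover have "(\<alpha> * L) / real n * Q \<le> Q / 2"
  proof -
    have "(\<alpha> * L) / real n \<le> 1 / 2"
      using \<alpha>L \<alpha> L \<open>real n \<ge> 1\<close> by (simp add: field_simps)
    then show ?thesis using Q by (metis mult_right_mono times_divide_eq_left mult_1)
  qed
  moreover have "Fx - \<alpha> * ((g2 + N2 - D2) / 2) + L * \<alpha>\<^sup>2 / 2 * (N2 + (1 / real n)\<^sup>2 * SV)
      = Fx - \<alpha> / 2 * g2 - \<alpha> / 2 * N2 + \<alpha> * D2 / 2 + L * \<alpha>\<^sup>2 / 2 * N2
        + L * \<alpha>\<^sup>2 / 2 * ((1 / real n)\<^sup>2 * SV)"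
    by (simp add: field_simps)
  moreover have "\<alpha> * L\<^sup>2 / real n * P = Q"
    by (simp add: Q_def)
  ultimately show ?thesis
    using field_sum_of_halves by linarith
qed

lemma mean_avg_saga_sample:
  assumes m: "m \<ge> 1"
  shows "(1 / real m ^ n) *\<^sub>R (\<Sum>\<tau>\<in>PiE {..<n} (\<lambda>_. {..<m}). avg_x n (\<lambda>i. saga_sample m gf x z i (\<tau> i)))
       = avg_x n (\<lambda>i. (1 / real m) *\<^sub>R (\<Sum>j<m. gf i j (x i)))"
proof -
  have "(1 / real m ^ n) *\<^sub>R (\<Sum>\<tau>\<in>PiE {..<n} (\<lambda>_. {..<m}). \<Sum>i<n. saga_sample m gf x z i (\<tau> i))
      = (\<Sum>i<n. (1 / real m) *\<^sub>R (\<Sum>j<m. saga_sample m gf x z i j))"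
    using mean_PiE_sum[of "{..<n}" "{..<m}" "saga_sample m gf x z"] m by (simp add: lessThan_empty_iff)
  moreover have "(1 / real m ^ n) *\<^sub>R (\<Sum>\<tau>\<in>PiE {..<n} (\<lambda>_. {..<m}). avg_x n (\<lambda>i. saga_sample m gf x z i (\<tau> i)))
      = (1 / real n) *\<^sub>R ((1 / real m ^ n) *\<^sub>R (\<Sum>\<tau>\<in>PiE {..<n} (\<lambda>_. {..<m}). \<Sum>i<n. saga_sample m gf x z i (\<tau> i)))"
    by (simp add: avg_x_def scaleR_left_commute flip: scaleR_sum_right)
  ultimately show ?thesis
    by (simp only: avg_x_def sum_saga_sample)
qed

lemma second_moment_avg_saga_sample:
  assumes m: "m \<ge> 1"
  shows "(1 / real m ^ n) * (\<Sum>\<tau>\<in>PiE {..<n} (\<lambda>_. {..<m}). (norm (avg_x n (\<lambda>i. saga_sample m gf x z i (\<tau> i))))\<^sup>2)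
       = (norm (avg_x n (\<lambda>i. (1 / real m) *\<^sub>R (\<Sum>j<m. gf i j (x i)))))\<^sup>2
         + (1 / real n)\<^sup>2 * (\<Sum>i<n. (1 / real m) * (\<Sum>j<m. (norm (saga_sample m gf x z i j))\<^sup>2)
                                  - (norm ((1 / real m) *\<^sub>R (\<Sum>j<m. saga_sample m gf x z i j)))\<^sup>2)"
proof -
  let ?T = "PiE {..<n} (\<lambda>_. {..<m})" and ?G = "saga_sample m gf x z"
  have "(1 / real m ^ n) * (\<Sum>\<tau>\<in>?T. (norm (\<Sum>i<n. ?G i (\<tau> i)))\<^sup>2)
      = (norm (\<Sum>i<n. (1 / real m) *\<^sub>R (\<Sum>j<m. ?G i j)))\<^sup>2
        + (\<Sum>i<n. (1 / real m) * (\<Sum>j<m. (norm (?G i j))\<^sup>2) - (norm ((1 / real m) *\<^sub>R (\<Sum>j<m. ?G i j)))\<^sup>2)"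
    using mean_PiE_norm_sq[of "{..<n}" "{..<m}" ?G] m by (simp add: lessThan_empty_iff)
  moreover have sq: "(norm (avg_x n v))\<^sup>2 = (1 / real n)\<^sup>2 * (norm (\<Sum>i<n. v i))\<^sup>2" for v :: "nat \<Rightarrow> real^'p"
    by (simp add: avg_x_def power_divide)
  then have "(1 / real m ^ n) * (\<Sum>\<tau>\<in>?T. (norm (avg_x n (\<lambda>i. ?G i (\<tau> i))))\<^sup>2)
      = (1 / real n)\<^sup>2 * ((1 / real m ^ n) * (\<Sum>\<tau>\<in>?T. (norm (\<Sum>i<n. ?G i (\<tau> i)))\<^sup>2))"
    by (simp only: sq flip: sum_distrib_left) (simp only: mult.left_commute)
  moreover have "(norm (avg_x n (\<lambda>i. (1 / real m) *\<^sub>R (\<Sum>j<m. gf i j (x i)))))\<^sup>2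
      = (1 / real n)\<^sup>2 * (norm (\<Sum>i<n. (1 / real m) *\<^sub>R (\<Sum>j<m. ?G i j)))\<^sup>2"
    by (simp only: sq sum_saga_sample)
  ultimately show ?thesis
    by (simp only: distrib_left)
qed

definition descent_quadratic :: "nat \<Rightarrow> nat \<Rightarrow> real \<Rightarrow> real \<Rightarrow> (real^'p \<Rightarrow> real) \<Rightarrow> (real^'p \<Rightarrow> real^'p)
    \<Rightarrow> (nat \<Rightarrow> nat \<Rightarrow> real^'p \<Rightarrow> real^'p) \<Rightarrow> 'p gt_state \<Rightarrow> draw \<Rightarrow> real" where
  "descent_quadratic n m L \<alpha> F gF gf s d =
     F (avg_x n (fst s)) - \<alpha> * (gF (avg_x n (fst s)) \<bullet> avg_x n (saga_grad m gf s d))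
     + L * \<alpha>\<^sup>2 / 2 * (norm (avg_x n (saga_grad m gf s d)))\<^sup>2"

lemma F_gt_saga_Suc_le:
  assumes "lipschitz_gradient L F gF" "doubly_stochastic n W"
  shows "F (avg_x n (fst (gt_saga n m W \<alpha> gf x0 (Suc k) \<omega>)))
       \<le> descent_quadratic n m L \<alpha> F gF gf (gt_saga n m W \<alpha> gf x0 k \<omega>) (\<omega> k)"
proof -
  let ?xb = "avg_x n (fst (gt_saga n m W \<alpha> gf x0 k \<omega>))"
  let ?g = "avg_x n (saga_grad m gf (gt_saga n m W \<alpha> gf x0 k \<omega>) (\<omega> k))"
  have "avg_x n (fst (gt_saga n m W \<alpha> gf x0 (Suc k) \<omega>)) = ?xb - \<alpha> *\<^sub>R ?g"
    by (rule avg_x_gt_saga_Suc[OF assms(2)])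
  then show ?thesis
    using lipschitz_gradient_descent[OF assms(1), of "?xb - \<alpha> *\<^sub>R ?g" ?xb]
    by (simp add: descent_quadratic_def power_mult_distrib)
qed

lemma descent_quadratic_cong:
  assumes "state_eq_on n s s'" "draw_eq_on n d d'"
  shows "descent_quadratic n m L \<alpha> F gF gf s d = descent_quadratic n m L \<alpha> F gF gf s' d'"
proof -
  have "avg_x n (saga_grad m gf s d) = avg_x n (saga_grad m gf s' d')"
    using assms by (auto simp: draw_eq_on_def intro!: avg_x_cong saga_grad_cong)
  then show ?thesis
    using avg_x_state_cong[OF assms(1)] by (simp add: descent_quadratic_def)
qed

lemma expectation_descent_quadratic:
  fixes n :: nat and gf :: "nat \<Rightarrow> nat \<Rightarrow> real^'p \<Rightarrow> real^'p" and x :: "nat \<Rightarrow> real^'p"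
    and z :: "nat \<Rightarrow> nat \<Rightarrow> real^'p"
  assumes m: "m \<ge> 1"
  defines "gs \<tau> \<equiv> avg_x n (\<lambda>i. saga_sample m gf x z i (\<tau> i))"
  shows "measure_pmf.expectation (draw_pmf n m) (descent_quadratic n m L \<alpha> F gF gf (x, y, z, gp))
       = F (avg_x n x) - \<alpha> * (gF (avg_x n x) \<bullet> ((1 / real m ^ n) *\<^sub>R (\<Sum>\<tau>\<in>PiE {..<n} (\<lambda>_. {..<m}). gs \<tau>)))
         + L * \<alpha>\<^sup>2 / 2 * ((1 / real m ^ n) * (\<Sum>\<tau>\<in>PiE {..<n} (\<lambda>_. {..<m}). (norm (gs \<tau>))\<^sup>2))"
proof -
  let ?T = "PiE {..<n} (\<lambda>_. {..<m})" and ?xb = "avg_x n x"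
  let ?q = "\<lambda>\<tau>. F ?xb - \<alpha> * (gF ?xb \<bullet> gs \<tau>) + L * \<alpha>\<^sup>2 / 2 * (norm (gs \<tau>))\<^sup>2"
  have "descent_quadratic n m L \<alpha> F gF gf (x, y, z, gp) = (\<lambda>d. ?q (fst d))"
    by (simp add: fun_eq_iff descent_quadratic_def gs_def avg_x_def saga_grad_eq_saga_sample)
  then have "measure_pmf.expectation (draw_pmf n m) (descent_quadratic n m L \<alpha> F gF gf (x, y, z, gp))
      = (1 / real m ^ n) * (\<Sum>\<tau>\<in>?T. ?q \<tau>)"
    using expectation_draw_pmf_fst[OF m, of n ?q] by simp
  also have "(\<Sum>\<tau>\<in>?T. ?q \<tau>)
      = real m ^ n * F ?xb - \<alpha> * (gF ?xb \<bullet> (\<Sum>\<tau>\<in>?T. gs \<tau>)) + L * \<alpha>\<^sup>2 / 2 * (\<Sum>\<tau>\<in>?T. (norm (gs \<tau>))\<^sup>2)"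
    by (simp add: sum.distrib sum_subtractf sum_distrib_left inner_sum_right card_PiE)
  finally show ?thesis
    using m by (simp add: distrib_left right_diff_distrib mult.left_commute)
qed

lemma sum_saga_sample_variance_le:
  assumes n: "n \<ge> 1" and m: "m \<ge> 1"
    and smooth: "\<And>i j x y. i < n \<Longrightarrow> j < m \<Longrightarrow> norm (gf i j x - gf i j y) \<le> L * norm (x - y)"
  shows "(\<Sum>i<n. (1 / real m) * (\<Sum>j<m. (norm (saga_sample m gf x z i j))\<^sup>2)
                  - (norm ((1 / real m) *\<^sub>R (\<Sum>j<m. saga_sample m gf x z i j)))\<^sup>2)
         \<le> 2 * L\<^sup>2 * (\<Sum>i<n. (norm (x i - v))\<^sup>2)
           + 2 * L\<^sup>2 * real n * ((1 / real n) * (\<Sum>i<n. (1 / real m) * (\<Sum>j<m. (norm (v - z i j))\<^sup>2)))"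
proof -
  have "(\<Sum>i<n. (1 / real m) * (\<Sum>j<m. (norm (saga_sample m gf x z i j))\<^sup>2)
                - (norm ((1 / real m) *\<^sub>R (\<Sum>j<m. saga_sample m gf x z i j)))\<^sup>2)
      \<le> (\<Sum>i<n. 2 * L\<^sup>2 * (norm (x i - v))\<^sup>2 + 2 * L\<^sup>2 * ((1 / real m) * (\<Sum>j<m. (norm (v - z i j))\<^sup>2)))"
    using m smooth by (intro sum_mono saga_sample_variance_le) auto
  then show ?thesis
    using n by (simp add: sum.distrib sum_distrib_left mult.assoc)
qed

lemma expected_descent_quadratic_le:
  fixes gf :: "nat \<Rightarrow> nat \<Rightarrow> real^'p \<Rightarrow> real^'p" and x :: "nat \<Rightarrow> real^'p"
  assumes n: "n \<ge> 1" and m: "m \<ge> 1" and L: "L > 0"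
    and smooth: "\<And>i j x y. i < n \<Longrightarrow> j < m \<Longrightarrow> norm (gf i j x - gf i j y) \<le> L * norm (x - y)"
    and gF_def: "gF = (\<lambda>x. (1 / real n) *\<^sub>R (\<Sum>i<n. (1 / real m) *\<^sub>R (\<Sum>j<m. gf i j x)))"
    and \<alpha>: "0 < \<alpha>" "\<alpha> \<le> 1 / (2 * L)"
  defines "xb \<equiv> avg_x n x"
  shows "measure_pmf.expectation (draw_pmf n m) (descent_quadratic n m L \<alpha> F gF gf (x, y, z, gp))
     \<le> F xb - \<alpha> / 2 * (norm (gF xb))\<^sup>2
        - \<alpha> / 4 * (norm ((1 / real n) *\<^sub>R (\<Sum>i<n. (1 / real m) *\<^sub>R (\<Sum>j<m. gf i j (x i)))))\<^sup>2
        + \<alpha> * L\<^sup>2 / real n * (\<Sum>i<n. (norm (x i - xb))\<^sup>2)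
        + \<alpha>\<^sup>2 * L ^ 3 / real n * ((1 / real n) * (\<Sum>i<n. (1 / real m) * (\<Sum>j<m. (norm (xb - z i j))\<^sup>2)))"
proof -
  let ?G = "saga_sample m gf x z"
  define Nb where "Nb = avg_x n (\<lambda>i. (1 / real m) *\<^sub>R (\<Sum>j<m. gf i j (x i)))"
  define P where "P = (\<Sum>i<n. (norm (x i - xb))\<^sup>2)"
  define t where "t = (1 / real n) * (\<Sum>i<n. (1 / real m) * (\<Sum>j<m. (norm (xb - z i j))\<^sup>2))"
  define V where "V i = (1 / real m) * (\<Sum>j<m. (norm (?G i j))\<^sup>2) - (norm ((1 / real m) *\<^sub>R (\<Sum>j<m. ?G i j)))\<^sup>2" for i
  have SV: "(\<Sum>i<n. V i) \<le> 2 * L\<^sup>2 * P + 2 * L\<^sup>2 * real n * t"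
    unfolding V_def P_def t_def by (rule sum_saga_sample_variance_le[OF n m smooth])
  have D2: "(norm (gF xb - Nb))\<^sup>2 \<le> L\<^sup>2 / real n * P"
    unfolding gF_def Nb_def P_def avg_x_def using norm_mean_grad_diff_le[OF n m smooth] by simp
  have polar: "gF xb \<bullet> Nb = ((norm (gF xb))\<^sup>2 + (norm Nb)\<^sup>2 - (norm (gF xb - Nb))\<^sup>2) / 2"
    by (simp add: power2_norm_eq_inner inner_diff_left inner_diff_right inner_commute)
  have "measure_pmf.expectation (draw_pmf n m) (descent_quadratic n m L \<alpha> F gF gf (x, y, z, gp))
      = F xb - \<alpha> * (gF xb \<bullet> Nb) + L * \<alpha>\<^sup>2 / 2 * ((norm Nb)\<^sup>2 + (1 / real n)\<^sup>2 * (\<Sum>i<n. V i))"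
    unfolding expectation_descent_quadratic[OF m] xb_def Nb_def V_def
    by (simp only: mean_avg_saga_sample[OF m] second_moment_avg_saga_sample[OF m])
  also have "\<dots> \<le> F xb - \<alpha> / 2 * (norm (gF xb))\<^sup>2 - \<alpha> / 4 * (norm Nb)\<^sup>2 + \<alpha> * L\<^sup>2 / real n * P
                  + \<alpha>\<^sup>2 * L ^ 3 / real n * t"
    unfolding polar by (rule expected_descent_arith[OF n L \<alpha> D2 SV])
      (auto simp: P_def t_def intro!: sum_nonneg divide_nonneg_nonneg)
  finally show ?thesis
    unfolding Nb_def P_def t_def avg_x_def .
qed

lemma real_cond_exp_F_gt_saga_Suc_le:
  assumes m: "m \<ge> 1" and smooth: "lipschitz_gradient L F gF" and W: "doubly_stochastic n W"
  shows "AE \<omega> in gt_space n m.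
     real_cond_exp (gt_space n m) (gt_filt n m k) (\<lambda>\<omega>. F (avg_x n (fst (gt_saga n m W \<alpha> gf x0 (Suc k) \<omega>)))) \<omega>
     \<le> measure_pmf.expectation (draw_pmf n m) (descent_quadratic n m L \<alpha> F gF gf (gt_saga n m W \<alpha> gf x0 k \<omega>))"
proof -
  interpret sigma_finite_subalgebra "gt_space n m" "gt_filt n m k"
    by (rule sigma_finite_subalgebra_gt_filt)
  define Q where "Q d \<omega> = descent_quadratic n m L \<alpha> F gF gf (gt_saga n m W \<alpha> gf x0 k \<omega>) d" for d \<omega>
  have "F (avg_x n (fst (gt_saga n m W \<alpha> gf x0 (Suc k) \<omega>))) \<le> Q (\<omega> k) \<omega>" for \<omega>
    unfolding Q_def using smooth W by (rule F_gt_saga_Suc_le)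
  moreover have "integrable (gt_space n m) (\<lambda>\<omega>. F (avg_x n (fst (gt_saga n m W \<alpha> gf x0 (Suc k) \<omega>))))"
    using m by (rule integrable_if_draws_agree) (intro arg_cong[where f = F] avg_x_state_cong gt_saga_cong)
  moreover have "integrable (gt_space n m) (\<lambda>\<omega>. Q (\<omega> k) \<omega>)"
  proof (rule integrable_if_draws_agree[OF m])
    fix \<omega> \<omega>' assume "draws_agree n (Suc k) \<omega> \<omega>'"
    then show "Q (\<omega> k) \<omega> = Q (\<omega>' k) \<omega>'"
      unfolding Q_def draws_agree_Suc by (intro descent_quadratic_cong gt_saga_cong) auto
  qed
  ultimately have "AE \<omega> in gt_space n m.
      real_cond_exp (gt_space n m) (gt_filt n m k) (\<lambda>\<omega>. F (avg_x n (fst (gt_saga n m W \<alpha> gf x0 (Suc k) \<omega>)))) \<omega>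
      \<le> real_cond_exp (gt_space n m) (gt_filt n m k) (\<lambda>\<omega>. Q (\<omega> k) \<omega>) \<omega>"
    by (intro real_cond_exp_mono) auto
  moreover have "AE \<omega> in gt_space n m.
      real_cond_exp (gt_space n m) (gt_filt n m k) (\<lambda>\<omega>. Q (\<omega> k) \<omega>) \<omega>
      = measure_pmf.expectation (draw_pmf n m) (\<lambda>d. Q d \<omega>)"
    unfolding Q_def using m by (rule real_cond_exp_fresh_draw)
      (auto intro!: descent_quadratic_cong gt_saga_cong state_eq_on_refl simp: draw_eq_on_def draws_agree_def)
  ultimately show ?thesis
    unfolding Q_def by eventually_elim simp
qed

lemma lipschitz_gradient_double_mean:
  assumes n: "n \<ge> 1" and m: "m \<ge> 1"
    and smooth: "\<And>i j. i < n \<Longrightarrow> j < m \<Longrightarrow> lipschitz_gradient L (f i j) (gf i j)"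
  shows "lipschitz_gradient L (\<lambda>x. (1 / real n) * (\<Sum>i<n. (1 / real m) * (\<Sum>j<m. f i j x)))
           (\<lambda>x. (1 / real n) *\<^sub>R (\<Sum>i<n. (1 / real m) *\<^sub>R (\<Sum>j<m. gf i j x)))"
proof -
  have "lipschitz_gradient L (\<lambda>x. (1 / real (card {..<m})) * (\<Sum>j\<in>{..<m}. f i j x))
          (\<lambda>x. (1 / real (card {..<m})) *\<^sub>R (\<Sum>j\<in>{..<m}. gf i j x))" if "i < n" for i
    using m smooth that by (intro lipschitz_gradient_mean) (auto simp: lessThan_empty_iff)
  then have "lipschitz_gradient L (\<lambda>x. (1 / real (card {..<n})) * (\<Sum>i\<in>{..<n}. (1 / real m) * (\<Sum>j<m. f i j x)))
      (\<lambda>x. (1 / real (card {..<n})) *\<^sub>R (\<Sum>i\<in>{..<n}. (1 / real m) *\<^sub>R (\<Sum>j<m. gf i j x)))"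
    using n by (intro lipschitz_gradient_mean) (auto simp: lessThan_empty_iff)
  then show ?thesis
    by simp
qed

theorem lemma4:
  fixes n m :: nat and L \<alpha> :: real
    and f :: "nat \<Rightarrow> nat \<Rightarrow> real^'p \<Rightarrow> real"
    and gf :: "nat \<Rightarrow> nat \<Rightarrow> real^'p \<Rightarrow> real^'p"
    and W :: "nat \<Rightarrow> nat \<Rightarrow> real" and x0 :: "real^'p"
    and F :: "real^'p \<Rightarrow> real" and gF :: "real^'p \<Rightarrow> real^'p"
    and k :: nat
  assumes n: "n \<ge> 1" and m: "m \<ge> 1" and L: "L > 0"
    and grad: "\<And>i j x. i < n \<Longrightarrow> j < m \<Longrightarrow> (f i j has_derivative (\<lambda>h. gf i j x \<bullet> h)) (at x)"
    and smooth: "\<And>i j x y. i < n \<Longrightarrow> j < m \<Longrightarrow> norm (gf i j x - gf i j y) \<le> L * norm (x - y)"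
    and F_def: "F = (\<lambda>x. (1 / real n) * (\<Sum>i<n. (1 / real m) * (\<Sum>j<m. f i j x)))"
    and gF_def: "gF = (\<lambda>x. (1 / real n) *\<^sub>R (\<Sum>i<n. (1 / real m) *\<^sub>R (\<Sum>j<m. gf i j x)))"
    and Fstar: "bdd_below (range F)"
    and W_ds: "doubly_stochastic n W" and W_prim: "primitive_mat n W"
    and alpha: "0 < \<alpha>" "\<alpha> \<le> 1 / (2 * L)"
  shows "AE \<omega> in gt_space n m.
     real_cond_exp (gt_space n m) (gt_filt n m k)
       (\<lambda>\<omega>. F (avg_x n (fst (gt_saga n m W \<alpha> gf x0 (Suc k) \<omega>)))) \<omega>
     \<le> (let (x, y, z, gp) = gt_saga n m W \<alpha> gf x0 k \<omega>;
             xb = avg_x n x;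
             t = (1 / real n) * (\<Sum>i<n. (1 / real m) * (\<Sum>j<m. (norm (xb - z i j))\<^sup>2))
         in F xb - \<alpha> / 2 * (norm (gF xb))\<^sup>2
            - \<alpha> / 4 * (norm ((1 / real n) *\<^sub>R (\<Sum>i<n. (1 / real m) *\<^sub>R (\<Sum>j<m. gf i j (x i)))))\<^sup>2
            + \<alpha> * L\<^sup>2 / real n * (\<Sum>i<n. (norm (x i - xb))\<^sup>2)
            + \<alpha>\<^sup>2 * L ^ 3 / real n * t)"
proof -
  have "lipschitz_gradient L F gF"
    unfolding F_def gF_def using n m grad smooth
    by (intro lipschitz_gradient_double_mean) (auto simp: lipschitz_gradient_def)
  from real_cond_exp_F_gt_saga_Suc_le[OF m this W_ds, of k \<alpha> gf x0]
  show ?thesis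
  proof eventually_elim
    case (elim \<omega>)
    obtain x y z gp where st: "gt_saga n m W \<alpha> gf x0 k \<omega> = (x, y, z, gp)"
      by (cases "gt_saga n m W \<alpha> gf x0 k \<omega>") auto
    from elim expected_descent_quadratic_le[OF n m L smooth gF_def alpha, where x = x and F = F and y = y
      and z = z and gp = gp]
    show ?case
      by (simp add: st Let_def)
  qed
qed

end
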